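(* Let $F$ be a field of characteristic $0$, let $k$ be a positive integer and $1\le t\le k$, and let $m,l_1,\dots,l_t$ be non-negative integers with $n=l_1+\cdots+l_t+m$. Let $\psi\colon V_n\to V_{m,l_1,\dots,l_t}$ be the linear isomorphism induced by the substitution $x_i\mapsto x^{1}_{i}$ if $1\le i\le l_1$; $x_i\mapsto x^{2}_{i-l_1}$ if $l_1+1\le i\le l_1+l_2$; $\dots$; $x_i\mapsto x^{t}_{i-(l_1+\cdots+l_{t-1})}$ if $l_1+\cdots+l_{t-1}+1\le i\le l_1+\cdots+l_t$; and $x_i\mapsto z_{i-(l_1+\cdots+l_t)}$ otherwise. Then: (1) $\psi(V_n\cap T(E))=V_{m,l_1,\dots,l_t}\cap T_{\mathbb{Z}}(E^{\infty})$; (2) if $1\cdot l_1+2\cdot l_2+\cdots+t\cdot l_t\le k$, then $\psi(V_n\cap T(E))=V_{m,l_1,\dots,l_t}\cap T_{\mathbb{Z}}(E^{k^\ast})$.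
   Context: $L$ is a vector space over $F$ with basis $e_1,e_2,\dots$, and $E$ is its unital Grassmann algebra (basis $1$ and $e_{i_1}\cdots e_{i_k}$, $i_1<\cdots<i_k$, with $e_ie_j=-e_je_i$). A $\mathbb{Z}$-grading on $E$ is induced by assigning degrees to the $e_i$ and giving a basis monomial the sum of the degrees of its factors ($1$ has degree $0$). $E^{k^\ast}$: $\|e_i\|=1$ for $i=1,\dots,k$ and $\|e_i\|=0$ for $i>k$. $E^{\infty}$: $\|e_i\|=0$ for $i$ even and $\|e_i\|=1$ for $i$ odd. $T(E)$ is the set of ordinary polynomial identities of $E$ in the free associative algebra, and $V_n$ is the space of multilinear polynomials in $x_1,\dots,x_n$. $F\langle X|\mathbb{Z}\rangle$ is the free unital associative algebra on variables each of which has an integer degree $\alpha(x)$ (countably many of each degree); $f(x_1,\dots,x_r)$ is a $\mathbb{Z}$-graded identity of a $\mathbb{Z}$-graded algebra $A$ if it vanishes whenever each $x_j$ is replaced by an element of $A_{\alpha(x_j)}$; $T_{\mathbb{Z}}(A)$ is the set of such. $V_{m,l_1,\dots,l_t}$ is the space of multilinear graded polynomials in the variables $z_1,\dots,z_m$ of degree $0$, $x^1_1,\dots,x^1_{l_1}$ of degree $1$, $\dots$, $x^t_1,\dots,x^t_{l_t}$ of degree $t$. *)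

theory Defs
  imports Main
begin

text \<open>An element of E is a finitely supported coefficient function on basis monomials
  e_S = e_{i_1} ... e_{i_k} (i_1 < ... < i_k), S a finite subset of {1,2,...};
  the empty set corresponds to the unit 1.\<close>

type_synonym 'a grass = "nat set \<Rightarrow> 'a"

definition grass_elem :: "'a::zero grass \<Rightarrow> bool" where
  "grass_elem g \<longleftrightarrow> finite {S. g S \<noteq> 0} \<and> (\<forall>S. g S \<noteq> 0 \<longrightarrow> finite S \<and> S \<subseteq> {1..})"

definition grass_zero :: "'a::zero grass" where
  "grass_zero = (\<lambda>S. 0)"

definition grass_one :: "'a::{zero,one} grass" where
  "grass_one = (\<lambda>S. if S = {} then 1 else 0)"

text \<open>Sign of e_S e_T = sign * e_{S \<union> T} for disjoint S, T.\<close>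
definition grass_sign :: "nat set \<Rightarrow> nat set \<Rightarrow> 'a::comm_ring_1" where
  "grass_sign S T = (-1) ^ card {(i, j). i \<in> S \<and> j \<in> T \<and> j < i}"

definition grass_mult :: "'a::comm_ring_1 grass \<Rightarrow> 'a grass \<Rightarrow> 'a grass" where
  "grass_mult g h = (\<lambda>U. \<Sum>(S, T) \<in> {(S, T). g S \<noteq> 0 \<and> h T \<noteq> 0 \<and> S \<inter> T = {} \<and> S \<union> T = U}.
      grass_sign S T * g S * h T)"

definition grass_prod :: "'a::comm_ring_1 grass list \<Rightarrow> 'a grass" where
  "grass_prod xs = foldr grass_mult xs grass_one"

text \<open>Homogeneous component of degree d for the grading given by deg e_i = \<delta> i.\<close>
definition grass_comp :: "(nat \<Rightarrow> int) \<Rightarrow> int \<Rightarrow> 'a::zero grass set" where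
  "grass_comp \<delta> d = {g. grass_elem g \<and> (\<forall>S. g S \<noteq> 0 \<longrightarrow> (\<Sum>i\<in>S. \<delta> i) = d)}"

definition delta_kstar :: "nat \<Rightarrow> nat \<Rightarrow> int" where
  "delta_kstar k i = (if 1 \<le> i \<and> i \<le> k then 1 else 0)"

definition delta_inf :: "nat \<Rightarrow> int" where
  "delta_inf i = (if odd i then 1 else 0)"

text \<open>A polynomial in variables of type 'v is a finitely supported coefficient function
  on words (monomials).\<close>
type_synonym ('v, 'a) ncpoly = "'v list \<Rightarrow> 'a"

definition ncpoly :: "('v, 'a::zero) ncpoly \<Rightarrow> bool" where
  "ncpoly f \<longleftrightarrow> finite {w. f w \<noteq> 0}"

definition eval_ncpoly :: "('v, 'a::comm_ring_1) ncpoly \<Rightarrow> ('v \<Rightarrow> 'a grass) \<Rightarrow> 'a grass" where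
  "eval_ncpoly f \<phi> = (\<lambda>U. \<Sum>w\<in>{w. f w \<noteq> 0}. f w * grass_prod (map \<phi> w) U)"

definition ordinary_ids :: "(nat, 'a::comm_ring_1) ncpoly set" where
  "ordinary_ids = {f. ncpoly f \<and>
     (\<forall>\<phi>. (\<forall>i. grass_elem (\<phi> i)) \<longrightarrow> eval_ncpoly f \<phi> = grass_zero)}"

text \<open>F<X|Z>: variables are pairs (d, i), d the integer degree; countably many of each degree.
  T_Z(E) for the grading \<delta>.\<close>
definition graded_ids :: "(nat \<Rightarrow> int) \<Rightarrow> (int \<times> nat, 'a::comm_ring_1) ncpoly set" where
  "graded_ids \<delta> = {f. ncpoly f \<and>
     (\<forall>\<phi>. (\<forall>v. \<phi> v \<in> grass_comp \<delta> (fst v)) \<longrightarrow> eval_ncpoly f \<phi> = grass_zero)}"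

definition multilin_ord :: "nat \<Rightarrow> (nat, 'a::zero) ncpoly set" where
  "multilin_ord n = {f. \<forall>w. f w \<noteq> 0 \<longrightarrow> distinct w \<and> set w = {1..n}}"

text \<open>Graded variables: z_i = (0, i) for i = 1..m and x^j_i = (j, i) for j = 1..t, i = 1..l_j.\<close>
definition graded_vars :: "nat \<Rightarrow> nat \<Rightarrow> (nat \<Rightarrow> nat) \<Rightarrow> (int \<times> nat) set" where
  "graded_vars m t l = {(0, i) | i. 1 \<le> i \<and> i \<le> m} \<union>
      {(int j, i) | j i. 1 \<le> j \<and> j \<le> t \<and> 1 \<le> i \<and> i \<le> l j}"

definition multilin_graded :: "nat \<Rightarrow> nat \<Rightarrow> (nat \<Rightarrow> nat) \<Rightarrow> (int \<times> nat, 'a::zero) ncpoly set" where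
  "multilin_graded m t l = {f. \<forall>w. f w \<noteq> 0 \<longrightarrow> distinct w \<and> set w = graded_vars m t l}"

definition psum :: "(nat \<Rightarrow> nat) \<Rightarrow> nat \<Rightarrow> nat" where
  "psum l j = (\<Sum>r = 1..j. l r)"

definition psi_var :: "nat \<Rightarrow> (nat \<Rightarrow> nat) \<Rightarrow> nat \<Rightarrow> int \<times> nat" where
  "psi_var t l i = (if i \<le> psum l t
      then (let j = (LEAST j. i \<le> psum l j) in (int j, i - psum l (j - 1)))
      else (0, i - psum l t))"

definition rename_vars :: "('v \<Rightarrow> 'w) \<Rightarrow> ('v, 'a::comm_monoid_add) ncpoly \<Rightarrow> ('w, 'a) ncpoly" where
  "rename_vars \<rho> f = (\<lambda>w'. \<Sum>w\<in>{w. f w \<noteq> 0 \<and> map \<rho> w = w'}. f w)"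

end

(*
  A multilinear polynomial f(x_1, ..., x_n) is an identity of E as soon as it vanishes whenever
  each x_i is replaced by a basis monomial e_(S_i), the S_i pairwise disjoint. The value is then
  c * e_(S_1 u ... u S_n), where c sums the coefficients of f with signs depending on the monomial,
  and passing to other disjoint sets T_i with |T_i| = |S_i| mod 2 multiplies every one of these
  signs by the same factor +-1. So it suffices that f vanishes on one disjoint family T of each
  parity pattern. After renaming by psi, a graded identity vanishes on every family with
  deg(e_(T_i)) = deg psi(x_i), and such families of every parity pattern exist: E^infinity has
  infinitely many generators of degrees 0 and 1, and E^{k*} has k generators of degree 1, which
  suffice when l_1 + 2 l_2 + ... + t l_t <= k.
*)

theory Submission
  imports Defs "HOL-Library.Function_Algebras" "HOL-Library.Disjoint_Sets"
begin

section \<open>Basis monomials of the Grassmann algebra\<close>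

definition grass_monom :: "'a::zero \<Rightarrow> nat set \<Rightarrow> 'a grass" where
  "grass_monom c A = (\<lambda>U. if U = A then c else 0)"

lemma grass_zero_eq_0: "grass_zero = 0"
  by (simp add: grass_zero_def zero_fun_def)

lemma grass_monom_0 [simp]: "grass_monom 0 A = 0"
  by (auto simp: grass_monom_def)

lemma grass_mult_0_right [simp]: "grass_mult g 0 = 0"
  by (simp add: grass_mult_def zero_fun_def)

lemma grass_mult_monom:
  "grass_mult (grass_monom c A) (grass_monom d B :: 'a::comm_ring_1 grass) =
     (if A \<inter> B = {} then grass_monom (grass_sign A B * c * d) (A \<union> B) else 0)"
proof (rule ext)
  fix U
  let ?P = "{(S, T). grass_monom c A S \<noteq> 0 \<and> grass_monom d B T \<noteq> 0 \<and> S \<inter> T = {} \<and> S \<union> T = U}"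
  have "?P = (if c \<noteq> 0 \<and> d \<noteq> 0 \<and> A \<inter> B = {} \<and> A \<union> B = U then {(A, B)} else {})"
    by (auto simp: grass_monom_def)
  then show "grass_mult (grass_monom c A) (grass_monom d B) U =
      (if A \<inter> B = {} then grass_monom (grass_sign A B * c * d) (A \<union> B) else 0) U"
    by (auto simp: grass_mult_def grass_monom_def)
qed

fun word_sign :: "('v \<Rightarrow> nat set) \<Rightarrow> 'v list \<Rightarrow> 'a::comm_ring_1" where
  "word_sign S [] = 1"
| "word_sign S (x # w) = grass_sign (S x) (\<Union>(S ` set w)) * word_sign S w"

lemma grass_prod_monom:
  assumes "distinct w"
  shows "grass_prod (map (\<lambda>x. grass_monom (c x) (S x)) w) =
    (if disjoint_family_on S (set w)
     then grass_monom ((\<Prod>x\<leftarrow>w. c x) * (word_sign S w :: 'a::comm_ring_1)) (\<Union>(S ` set w)) else 0)"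
  using assms
proof (induction w)
  case Nil
  then show ?case by (auto simp: grass_prod_def grass_one_def grass_monom_def disjoint_family_on_def)
next
  case (Cons x w)
  then show ?case
    by (auto simp: grass_prod_def grass_mult_monom disjoint_family_on_insert mult_ac)
qed

lemma grass_elem_0 [simp]: "grass_elem 0"
  by (simp add: grass_elem_def)

lemma grass_elem_one: "grass_elem grass_one"
  by (simp add: grass_elem_def grass_one_def)

lemma grass_elem_monom: "finite A \<Longrightarrow> A \<subseteq> {1..} \<Longrightarrow> grass_elem (grass_monom c A)"
  by (auto simp: grass_elem_def grass_monom_def Collect_conv_if)

lemma grass_elem_add:
  fixes a b :: "'a::monoid_add grass"
  assumes "grass_elem a" "grass_elem b"
  shows "grass_elem (a + b)"
proof -
  have "{S. (a + b) S \<noteq> 0} \<subseteq> {S. a S \<noteq> 0} \<union> {S. b S \<noteq> 0}" by auto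
  with assms show ?thesis unfolding grass_elem_def by (auto intro: finite_subset)
qed

lemma grass_elem_mult:
  assumes g: "grass_elem g" and h: "grass_elem h"
  shows "grass_elem (grass_mult g h)"
proof -
  have supp: "{U. grass_mult g h U \<noteq> 0} \<subseteq> (\<lambda>(S, T). S \<union> T) ` ({S. g S \<noteq> 0} \<times> {T. h T \<noteq> 0})"
  proof
    fix U assume "U \<in> {U. grass_mult g h U \<noteq> 0}"
    then have "{(S, T). g S \<noteq> 0 \<and> h T \<noteq> 0 \<and> S \<inter> T = {} \<and> S \<union> T = U} \<noteq> {}"
      by (force simp: grass_mult_def)
    then show "U \<in> (\<lambda>(S, T). S \<union> T) ` ({S. g S \<noteq> 0} \<times> {T. h T \<noteq> 0})" by auto
  qed
  have "finite ((\<lambda>(S, T). S \<union> T) ` ({S. g S \<noteq> 0} \<times> {T. h T \<noteq> 0}))"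
    using g h by (simp add: grass_elem_def)
  then have "finite {U. grass_mult g h U \<noteq> 0}" by (rule finite_subset[OF supp])
  moreover have "finite U \<and> U \<subseteq> {1..}" if "grass_mult g h U \<noteq> 0" for U
  proof -
    from that supp obtain S T where "g S \<noteq> 0" "h T \<noteq> 0" "U = S \<union> T" by blast
    with g h show ?thesis unfolding grass_elem_def by blast
  qed
  ultimately show ?thesis by (auto simp: grass_elem_def)
qed

lemma grass_elem_prod: "(\<And>x. x \<in> set xs \<Longrightarrow> grass_elem x) \<Longrightarrow> grass_elem (grass_prod xs)"
  by (induction xs) (auto simp: grass_prod_def grass_elem_one grass_elem_mult)

lemma grass_mult_finite:
  assumes "finite U"
  shows "grass_mult g h U = (\<Sum>(S, T) \<in> {(S, T). S \<union> T = U \<and> S \<inter> T = {}}. grass_sign S T * g S * h T)"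
  unfolding grass_mult_def
proof (rule sum.mono_neutral_left)
  show "finite {(S, T). S \<union> T = U \<and> S \<inter> T = {}}"
    by (rule finite_subset[of _ "Pow U \<times> Pow U"]) (auto simp: assms)
qed auto

lemma grass_mult_infinite:
  assumes "grass_elem g" "grass_elem h" "infinite U"
  shows "grass_mult g h U = 0"
proof -
  have "{(S, T). g S \<noteq> 0 \<and> h T \<noteq> 0 \<and> S \<inter> T = {} \<and> S \<union> T = U} = {}"
    using assms by (auto simp: grass_elem_def)
  then show ?thesis unfolding grass_mult_def by (simp only: sum.empty)
qed

lemma grass_mult_add_left:
  assumes "grass_elem a" "grass_elem b" "grass_elem h"
  shows "grass_mult (a + b) h = grass_mult a h + grass_mult b h"
proof (rule ext)
  fix U
  show "grass_mult (a + b) h U = (grass_mult a h + grass_mult b h) U"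
    using assms grass_elem_add[OF assms(1,2)]
    by (cases "finite U")
      (simp_all add: grass_mult_finite grass_mult_infinite sum.distrib[symmetric] ring_distribs case_prod_beta)
qed

lemma grass_mult_add_right:
  assumes "grass_elem a" "grass_elem b" "grass_elem h"
  shows "grass_mult h (a + b) = grass_mult h a + grass_mult h b"
proof (rule ext)
  fix U
  show "grass_mult h (a + b) U = (grass_mult h a + grass_mult h b) U"
    using assms grass_elem_add[OF assms(1,2)]
    by (cases "finite U")
      (simp_all add: grass_mult_finite grass_mult_infinite sum.distrib[symmetric] ring_distribs case_prod_beta)
qed

section \<open>Signs of products of basis monomials\<close>

lemma grass_sign_empty_right [simp]: "grass_sign A {} = 1"
  by (simp add: grass_sign_def)

lemma finite_inversions: "finite A \<Longrightarrow> finite {(i, j). i \<in> A \<and> j \<in> B \<and> j < (i::nat)}"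
  by (rule finite_subset[of _ "Sigma A (\<lambda>i. {..<i})"]) auto

lemma grass_sign_Un_right:
  assumes "finite A" "B \<inter> C = {}"
  shows "grass_sign A (B \<union> C) = grass_sign A B * grass_sign A C"
proof -
  have "{(i, j). i \<in> A \<and> j \<in> B \<union> C \<and> j < i} =
        {(i, j). i \<in> A \<and> j \<in> B \<and> j < i} \<union> {(i, j). i \<in> A \<and> j \<in> C \<and> j < i}" by auto
  moreover have "card ({(i, j). i \<in> A \<and> j \<in> B \<and> j < i} \<union> {(i, j). i \<in> A \<and> j \<in> C \<and> j < i})
     = card {(i, j). i \<in> A \<and> j \<in> B \<and> j < i} + card {(i, j). i \<in> A \<and> j \<in> C \<and> j < i}"
    using assms by (intro card_Un_disjoint finite_inversions) auto
  ultimately show ?thesis by (simp add: grass_sign_def power_add)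
qed

lemma grass_sign_UN_right:
  assumes "finite A" "finite I" "disjoint_family_on S I"
  shows "grass_sign A (\<Union>(S ` I)) = (\<Prod>y\<in>I. grass_sign A (S y))"
  using assms(2,3)
proof (induction I rule: finite_induct)
  case empty
  then show ?case by simp
next
  case (insert x I)
  then have "S x \<inter> \<Union>(S ` I) = {}" "disjoint_family_on S I"
    by (simp_all add: disjoint_family_on_insert)
  then show ?case
    using insert by (simp add: grass_sign_Un_right[OF assms(1)])
qed

lemma grass_sign_square: "grass_sign A B * grass_sign A B = (1::'a::comm_ring_1)"
  by (simp add: grass_sign_def power_add[symmetric])

lemma grass_sign_swap:
  assumes "finite A" "finite B" "A \<inter> B = {}"
  shows "grass_sign A B * grass_sign B A = ((-1) ^ (card A * card B) :: 'a::comm_ring_1)"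
proof -
  let ?X = "{(i, j). i \<in> A \<and> j \<in> B \<and> j < i}"
  let ?Y = "{(i, j). i \<in> B \<and> j \<in> A \<and> j < i}"
  let ?Y' = "{(i, j). i \<in> A \<and> j \<in> B \<and> i < j}"
  have "?Y' = prod.swap ` ?Y" by auto
  then have "card ?Y = card ?Y'" by (simp add: card_image)
  moreover have "?X \<union> ?Y' = A \<times> B" using assms(3) by (auto simp: linorder_neq_iff)
  moreover have "card (?X \<union> ?Y') = card ?X + card ?Y'"
    by (rule card_Un_disjoint) (auto intro: finite_subset[OF _ finite_cartesian_product[OF assms(1,2)]])
  ultimately have "card ?X + card ?Y = card A * card B" by (simp add: card_cartesian_product)
  then show ?thesis by (simp add: grass_sign_def power_add[symmetric])
qed

lemma grass_sign_mult_commute_parity: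
  assumes "finite A" "finite B" "finite C" "finite D" "A \<inter> B = {}" "C \<inter> D = {}"
    and "even (card A) = even (card C)" "even (card B) = even (card D)"
  shows "grass_sign A B * grass_sign C D = (grass_sign B A * grass_sign D C :: 'a::comm_ring_1)"
proof -
  let ?u = "grass_sign A B * grass_sign C D :: 'a"
  let ?v = "grass_sign B A * grass_sign D C :: 'a"
  have "?u * ?v = (grass_sign A B * grass_sign B A) * (grass_sign C D * grass_sign D C)"
    by (simp add: mult_ac)
  also have "\<dots> = (-1) ^ (card A * card B) * (-1) ^ (card C * card D)"
    using assms by (simp add: grass_sign_swap)
  also have "\<dots> = 1"
    using assms(7,8) by (simp add: power_add[symmetric] minus_one_power_iff)
  finally have "?u * ?v = 1" .
  moreover have "?v * ?v = 1"
    by (metis grass_sign_square mult.assoc mult.left_commute mult_1_right)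
  ultimately show ?thesis
    by (metis mult.assoc mult_1_left mult_1_right)
qed

definition prod_pairs :: "('v::linorder \<Rightarrow> 'v \<Rightarrow> 'a::comm_monoid_mult) \<Rightarrow> 'v set \<Rightarrow> 'a" where
  "prod_pairs R A = (\<Prod>x\<in>A. \<Prod>y\<in>A. if y < x then R x y else 1)"

lemma prod_pairs_insert:
  assumes "finite A" "z \<notin> A" "\<And>y. y \<in> A \<Longrightarrow> R z y = R y z"
  shows "prod_pairs R (insert z A) = prod_pairs R A * (\<Prod>y\<in>A. R z y)"
proof -
  have "prod_pairs R (insert z A) =
      (\<Prod>y\<in>A. if y < z then R z y else 1) * (\<Prod>x\<in>A. if z < x then R x z else 1) * prod_pairs R A"
    using assms(1,2) by (simp add: prod_pairs_def prod.distrib mult_ac)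
  also have "(\<Prod>y\<in>A. if y < z then R z y else 1) * (\<Prod>x\<in>A. if z < x then R x z else 1) = (\<Prod>y\<in>A. R z y)"
    unfolding prod.distrib[symmetric] using assms by (intro prod.cong) (auto simp: linorder_neq_iff)
  finally show ?thesis by (simp add: mult_ac)
qed

lemma word_sign_square: "word_sign S w * word_sign S w = (1::'a::comm_ring_1)"
proof (induction w)
  case (Cons x w)
  have "word_sign S (x # w) * word_sign S (x # w) =
      (grass_sign (S x) (\<Union>(S ` set w)) * grass_sign (S x) (\<Union>(S ` set w))) * (word_sign S w * (word_sign S w :: 'a))"
    by (simp add: mult_ac)
  with Cons show ?case by (simp add: grass_sign_square)
qed simp

text \<open>When the parities agree, the factor contributed by a pair x, y to the product of the two
  word signs is symmetric in x and y, so the product depends only on the set of letters.\<close>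

lemma word_sign_mult_parity:
  fixes S T :: "'v::linorder \<Rightarrow> nat set"
  assumes "distinct w"
    and "\<And>x. x \<in> set w \<Longrightarrow> finite (S x) \<and> finite (T x)"
    and "disjoint_family_on S (set w)" "disjoint_family_on T (set w)"
    and "\<And>x. x \<in> set w \<Longrightarrow> even (card (S x)) = even (card (T x))"
  shows "word_sign S w * word_sign T w =
    (prod_pairs (\<lambda>x y. grass_sign (S x) (S y) * grass_sign (T x) (T y)) (set w) :: 'a::comm_ring_1)"
  using assms
proof (induction w)
  case Nil
  then show ?case by (simp add: prod_pairs_def)
next
  case (Cons x w)
  let ?R = "\<lambda>x y. grass_sign (S x) (S y) * grass_sign (T x) (T y) :: 'a"
  have disj: "disjoint_family_on S (set w)" "disjoint_family_on T (set w)"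
    using Cons.prems(3,4) by (auto intro: disjoint_family_on_mono)
  have "word_sign S (x # w) * word_sign T (x # w) =
     (grass_sign (S x) (\<Union>(S ` set w)) * grass_sign (T x) (\<Union>(T ` set w))) * (word_sign S w * (word_sign T w :: 'a))"
    by (simp add: mult_ac)
  also have "\<dots> = prod_pairs ?R (set w) * (\<Prod>y\<in>set w. ?R x y)"
    using Cons disj by (simp add: grass_sign_UN_right prod.distrib mult.commute)
  also have "\<dots> = prod_pairs ?R (insert x (set w))"
  proof (rule prod_pairs_insert[symmetric])
    fix y assume y: "y \<in> set w"
    with Cons.prems(1) have "x \<noteq> y" by auto
    with y Cons.prems show "?R x y = ?R y x"
      using disjoint_family_onD[OF Cons.prems(3), of x y] disjoint_family_onD[OF Cons.prems(4), of x y]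
      by (intro grass_sign_mult_commute_parity) auto
  qed (use Cons.prems in auto)
  finally show ?case by simp
qed

section \<open>Multilinear polynomials evaluated on E\<close>

definition multilin_on :: "'v set \<Rightarrow> ('v, 'a::zero) ncpoly set" where
  "multilin_on V = {f. \<forall>w. f w \<noteq> 0 \<longrightarrow> distinct w \<and> set w = V}"

lemma multilin_ord_eq: "multilin_ord n = multilin_on {1..n}"
  by (simp add: multilin_ord_def multilin_on_def)

lemma multilin_graded_eq: "multilin_graded m t l = multilin_on (graded_vars m t l)"
  by (simp add: multilin_graded_def multilin_on_def)

lemma multilin_onD: "f \<in> multilin_on V \<Longrightarrow> f w \<noteq> 0 \<Longrightarrow> distinct w \<and> set w = V"
  by (simp add: multilin_on_def)

lemma ncpoly_multilin:
  assumes "finite V" "f \<in> multilin_on V"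
  shows "ncpoly f"
proof -
  have "{w. f w \<noteq> 0} \<subseteq> {w. set w \<subseteq> V \<and> length w = card V}"
    using assms(2) by (auto dest: multilin_onD simp: distinct_card)
  then show ?thesis
    unfolding ncpoly_def using assms(1) by (rule finite_subset[OF _ finite_lists_length_eq])
qed

lemma eval_ncpoly_cong:
  assumes "f \<in> multilin_on V" "\<And>x. x \<in> V \<Longrightarrow> \<phi> x = \<psi> x"
  shows "eval_ncpoly f \<phi> = eval_ncpoly f \<psi>"
proof -
  have "grass_prod (map \<phi> w) = grass_prod (map \<psi> w)" if "f w \<noteq> 0" for w
    using assms multilin_onD[OF assms(1) that] by (metis map_eq_conv)
  then show ?thesis unfolding eval_ncpoly_def by (intro ext sum.cong) auto
qed

definition eval_monom_coeff :: "('v, 'a::comm_ring_1) ncpoly \<Rightarrow> ('v \<Rightarrow> nat set) \<Rightarrow> 'a" where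
  "eval_monom_coeff f S = (\<Sum>w | f w \<noteq> 0. f w * word_sign S w)"

lemma eval_ncpoly_monom:
  assumes "f \<in> multilin_on V" "finite V"
  shows "eval_ncpoly f (\<lambda>x. grass_monom (c x) (S x)) =
    (if disjoint_family_on S V
     then grass_monom ((\<Prod>x\<in>V. c x) * (eval_monom_coeff f S :: 'a::comm_ring_1)) (\<Union>(S ` V)) else 0)"
proof -
  have "grass_prod (map (\<lambda>x. grass_monom (c x) (S x)) w) =
     (if disjoint_family_on S V then grass_monom ((\<Prod>x\<in>V. c x) * word_sign S w) (\<Union>(S ` V)) else 0)"
    if "f w \<noteq> 0" for w
    using multilin_onD[OF assms(1) that] by (auto simp: grass_prod_monom prod.distinct_set_conv_list)
  then show ?thesis
    unfolding eval_ncpoly_def eval_monom_coeff_def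
    by (intro ext) (auto simp: grass_monom_def sum_distrib_left mult_ac)
qed

lemma eval_monom_coeff_parity:
  fixes S T :: "'v::linorder \<Rightarrow> nat set"
  assumes "f \<in> multilin_on V"
    and "\<And>x. x \<in> V \<Longrightarrow> finite (S x) \<and> finite (T x)"
    and "disjoint_family_on S V" "disjoint_family_on T V"
    and "\<And>x. x \<in> V \<Longrightarrow> even (card (S x)) = even (card (T x))"
  shows "eval_monom_coeff f S =
    prod_pairs (\<lambda>x y. grass_sign (S x) (S y) * grass_sign (T x) (T y)) V * (eval_monom_coeff f T :: 'a::comm_ring_1)"
proof -
  let ?P = "prod_pairs (\<lambda>x y. grass_sign (S x) (S y) * grass_sign (T x) (T y)) V :: 'a"
  have "word_sign S w = ?P * word_sign T w" if "f w \<noteq> 0" for w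
  proof -
    have w: "distinct w" "set w = V" using multilin_onD[OF assms(1) that] by auto
    have "word_sign S w = (word_sign S w * word_sign T w) * (word_sign T w :: 'a)"
      by (simp add: word_sign_square mult.assoc)
    also have "word_sign S w * word_sign T w = ?P"
      using word_sign_mult_parity[of w S T] w assms(2-5) by simp
    finally show ?thesis .
  qed
  then show ?thesis
    unfolding eval_monom_coeff_def sum_distrib_left by (intro sum.cong) (auto simp: mult_ac)
qed

lemma grass_monom_eq_0_iff [simp]: "grass_monom c A = 0 \<longleftrightarrow> c = 0"
  by (auto simp: grass_monom_def fun_eq_iff)

lemma grass_prod_Cons: "grass_prod (g # gs) = grass_mult g (grass_prod gs)"
  by (simp add: grass_prod_def)

lemma grass_prod_map_upd_add:
  fixes \<phi> :: "'v \<Rightarrow> 'a::comm_ring_1 grass"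
  assumes "distinct w" "i \<in> set w" "\<And>x. grass_elem (\<phi> x)" "grass_elem a" "grass_elem b"
  shows "grass_prod (map (\<phi>(i := a + b)) w) =
    grass_prod (map (\<phi>(i := a)) w) + grass_prod (map (\<phi>(i := b)) w)"
  using assms(1,2)
proof (induction w)
  case Nil
  then show ?case by simp
next
  case (Cons x w)
  have elem: "grass_elem (grass_prod (map \<psi> w))" if "\<And>x. grass_elem (\<psi> x)" for \<psi> :: "'v \<Rightarrow> 'a grass"
    using that by (intro grass_elem_prod) auto
  show ?case
  proof (cases "x = i")
    case True
    with Cons.prems have "map (\<phi>(i := c)) w = map \<phi> w" for c by (intro map_cong) auto
    with True have "grass_prod (map (\<phi>(i := c)) (x # w)) = grass_mult c (grass_prod (map \<phi> w))" for c
      by (simp only: list.map fun_upd_same grass_prod_Cons)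
    then show ?thesis
      using elem[OF assms(3)] assms(4,5) by (simp only: grass_mult_add_left)
  next
    case False
    then have step: "grass_prod (map (\<phi>(i := c)) (x # w)) = grass_mult (\<phi> x) (grass_prod (map (\<phi>(i := c)) w))"
      for c by (simp only: list.map fun_upd_other[OF False] grass_prod_Cons)
    have elem_upd: "grass_elem (grass_prod (map (\<phi>(i := c)) w))" if "grass_elem c" for c
      using that assms(3) by (intro elem) simp
    have "grass_prod (map (\<phi>(i := a + b)) (x # w)) =
        grass_mult (\<phi> x) (grass_prod (map (\<phi>(i := a)) w) + grass_prod (map (\<phi>(i := b)) w))"
      unfolding step by (rule arg_cong[OF Cons.IH]) (use Cons.prems False in auto)
    also have "\<dots> = grass_prod (map (\<phi>(i := a)) (x # w)) + grass_prod (map (\<phi>(i := b)) (x # w))"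
      unfolding step using elem_upd assms(3-5) by (intro grass_mult_add_right)
    finally show ?thesis .
  qed
qed

lemma eval_ncpoly_upd_add:
  assumes "f \<in> multilin_on V" "i \<in> V" "\<And>x. grass_elem (\<phi> x)" "grass_elem a" "grass_elem b"
  shows "eval_ncpoly f (\<phi>(i := a + b)) = eval_ncpoly f (\<phi>(i := a)) + eval_ncpoly f (\<phi>(i := b))"
proof -
  have "grass_prod (map (\<phi>(i := a + b)) w) =
      grass_prod (map (\<phi>(i := a)) w) + grass_prod (map (\<phi>(i := b)) w)" if "f w \<noteq> 0" for w
    using multilin_onD[OF assms(1) that] assms(2-5) by (intro grass_prod_map_upd_add) auto
  then show ?thesis
    unfolding eval_ncpoly_def by (intro ext) (simp add: sum.distrib[symmetric] ring_distribs)
qed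

lemma grass_elem_monom_if_card_supp_le_1:
  assumes "grass_elem g" "card {S. g S \<noteq> 0} \<le> 1"
  obtains c S where "finite S" "g = grass_monom c S"
proof (cases "{S. g S \<noteq> 0} = {}")
  case True
  then have "g = grass_monom 0 {}" by (auto simp: fun_eq_iff)
  then show ?thesis by (rule that[rotated]) simp
next
  case False
  with assms have "card {S. g S \<noteq> 0} = 1" by (auto simp: grass_elem_def le_Suc_eq)
  then obtain S where S: "{S. g S \<noteq> 0} = {S}" by (auto simp: card_1_singleton_iff)
  then have "g = grass_monom (g S) S" by (auto simp: grass_monom_def fun_eq_iff)
  moreover have "finite S" using assms(1) S by (auto simp: grass_elem_def)
  ultimately show ?thesis by (intro that[of S "g S"])
qed

lemma grass_elem_split:
  fixes g :: "'a::monoid_add grass"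
  assumes "grass_elem g" "2 \<le> card {S. g S \<noteq> 0}"
  obtains a b where "g = a + b" "grass_elem a" "grass_elem b"
    "card {S. a S \<noteq> 0} < card {S. g S \<noteq> 0}" "card {S. b S \<noteq> 0} < card {S. g S \<noteq> 0}"
proof -
  obtain S0 where S0: "g S0 \<noteq> 0"
    using assms(2) by (metis (mono_tags, lifting) Collect_empty_eq card.empty not_numeral_le_zero)
  have supp_fin: "finite {S. g S \<noteq> 0}" and "finite S0" "S0 \<subseteq> {1..}"
    using assms(1) S0 by (auto simp: grass_elem_def)
  define a where "a = grass_monom (g S0) S0"
  define b where "b = g(S0 := 0)"
  have supp_a: "{S. a S \<noteq> 0} = {S0}" and supp_b: "{S. b S \<noteq> 0} = {S. g S \<noteq> 0} - {S0}"
    using S0 by (auto simp: a_def b_def grass_monom_def)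
  show ?thesis
  proof
    show "g = a + b" by (auto simp: a_def b_def grass_monom_def fun_eq_iff)
    show "grass_elem a"
      unfolding a_def using \<open>finite S0\<close> \<open>S0 \<subseteq> {1..}\<close> by (rule grass_elem_monom)
    show "grass_elem b"
      using assms(1) unfolding grass_elem_def supp_b by (auto simp: b_def)
    show "card {S. a S \<noteq> 0} < card {S. g S \<noteq> 0}" "card {S. b S \<noteq> 0} < card {S. g S \<noteq> 0}"
      unfolding supp_a supp_b using S0 assms(2) supp_fin by (auto intro: psubset_card_mono)
  qed
qed

lemma multilin_eval_eq_0_if_monoms:
  fixes f :: "('v, 'a::comm_ring_1) ncpoly"
  assumes f: "f \<in> multilin_on V" "finite V"
    and monoms: "\<And>c S. (\<And>x. x \<in> V \<Longrightarrow> finite (S x)) \<Longrightarrow> eval_ncpoly f (\<lambda>x. grass_monom (c x) (S x)) = 0"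
    and "\<And>x. grass_elem (\<phi> x)"
  shows "eval_ncpoly f \<phi> = 0"
  using assms(4)
proof (induction "\<Sum>x\<in>V. card {S. \<phi> x S \<noteq> 0}" arbitrary: \<phi> rule: less_induct)
  case (less \<phi>)
  show ?case
  proof (cases "\<exists>i\<in>V. 2 \<le> card {S. \<phi> i S \<noteq> 0}")
    case True
    then obtain i where i: "i \<in> V" "2 \<le> card {S. \<phi> i S \<noteq> 0}" by blast
    obtain a b where ab: "\<phi> i = a + b" "grass_elem a" "grass_elem b"
      "card {S. a S \<noteq> 0} < card {S. \<phi> i S \<noteq> 0}" "card {S. b S \<noteq> 0} < card {S. \<phi> i S \<noteq> 0}"
      using grass_elem_split[OF less.prems i(2)] by blast
    have "(\<Sum>x\<in>V. card {S. (\<phi>(i := c)) x S \<noteq> 0}) < (\<Sum>x\<in>V. card {S. \<phi> x S \<noteq> 0})"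
      if "card {S. c S \<noteq> 0} < card {S. \<phi> i S \<noteq> 0}" for c
      using that f(2) i(1) by (auto simp: sum.remove[of V i])
    then have "eval_ncpoly f (\<phi>(i := a)) = 0" "eval_ncpoly f (\<phi>(i := b)) = 0"
      using less.hyps less.prems ab by auto
    moreover have "eval_ncpoly f \<phi> = eval_ncpoly f (\<phi>(i := a)) + eval_ncpoly f (\<phi>(i := b))"
      using eval_ncpoly_upd_add[of f V i \<phi> a b] f(1) i(1) less.prems ab(2,3)
      by (metis ab(1) fun_upd_triv)
    ultimately show ?thesis by (simp only: add_0)
  next
    case False
    have "\<exists>c S. finite S \<and> \<phi> x = grass_monom c S" if "x \<in> V" for x
    proof -
      have "card {S. \<phi> x S \<noteq> 0} \<le> 1" using False that by fastforce
      with less.prems obtain c S where "finite S" "\<phi> x = grass_monom c S"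
        by (rule grass_elem_monom_if_card_supp_le_1)
      then show ?thesis by blast
    qed
    then obtain c S where S: "\<And>x. x \<in> V \<Longrightarrow> finite (S x) \<and> \<phi> x = grass_monom (c x) (S x)"
      by metis
    then have "eval_ncpoly f \<phi> = eval_ncpoly f (\<lambda>x. grass_monom (c x) (S x))"
      by (intro eval_ncpoly_cong[OF f(1)]) auto
    also have "\<dots> = 0" using S by (intro monoms) auto
    finally show ?thesis .
  qed
qed

lemma multilin_mem_ordinary_ids:
  fixes f :: "(nat, 'a::comm_ring_1) ncpoly"
  assumes f: "f \<in> multilin_on V" "finite V"
    and parities: "\<And>p. \<exists>T. disjoint_family_on T V \<and> (\<forall>x\<in>V. finite (T x) \<and> even (card (T x)) = p x) \<and>
                    eval_ncpoly f (\<lambda>x. grass_monom 1 (T x)) = 0"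
  shows "f \<in> ordinary_ids"
proof -
  have monoms: "eval_ncpoly f (\<lambda>x. grass_monom (c x) (S x)) = 0"
    if S: "\<And>x. x \<in> V \<Longrightarrow> finite (S x)" for c S
  proof (cases "disjoint_family_on S V")
    case True
    obtain T where T: "disjoint_family_on T V" "\<forall>x\<in>V. finite (T x) \<and> even (card (T x)) = even (card (S x))"
      and T0: "eval_ncpoly f (\<lambda>x. grass_monom 1 (T x)) = 0"
      using parities[of "\<lambda>x. even (card (S x))"] by blast
    from T0 T(1) have "eval_monom_coeff f T = (0 :: 'a)"
      using eval_ncpoly_monom[OF f, of "\<lambda>_. 1" T] by simp
    moreover have "eval_monom_coeff f S =
        prod_pairs (\<lambda>x y. grass_sign (S x) (S y) * grass_sign (T x) (T y)) V * (eval_monom_coeff f T :: 'a)"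
      using True T S by (intro eval_monom_coeff_parity[OF f(1)]) auto
    ultimately show ?thesis by (simp add: eval_ncpoly_monom[OF f])
  next
    case False
    then show ?thesis by (simp add: eval_ncpoly_monom[OF f])
  qed
  have "eval_ncpoly f \<phi> = 0" if "\<And>i. grass_elem (\<phi> i)" for \<phi>
    by (rule multilin_eval_eq_0_if_monoms[OF f monoms that])
  then show ?thesis
    using ncpoly_multilin[OF f(2,1)] by (auto simp: ordinary_ids_def grass_zero_eq_0)
qed

section \<open>Renaming variables\<close>

lemma rename_vars_map:
  assumes "inj_on \<rho> V" "f \<in> multilin_on V" "set w \<subseteq> V"
  shows "rename_vars \<rho> f (map \<rho> w) = (f w :: 'a::comm_monoid_add)"
proof -
  have "w' = w" if "f w' \<noteq> 0" "map \<rho> w' = map \<rho> w" for w'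
  proof -
    have "inj_on \<rho> (set w' \<union> set w)"
      using multilin_onD[OF assms(2) that(1)] assms(1,3) by (auto intro: inj_on_subset)
    with that(2) show "w' = w" by (simp add: inj_on_map_eq_map)
  qed
  then have "{w'. f w' \<noteq> 0 \<and> map \<rho> w' = map \<rho> w} = (if f w \<noteq> 0 then {w} else {})"
    by auto
  then show ?thesis by (simp add: rename_vars_def)
qed

lemma rename_vars_eq_0:
  assumes "\<And>w. f w \<noteq> 0 \<Longrightarrow> map \<rho> w \<noteq> w'"
  shows "rename_vars \<rho> f w' = (0 :: 'a::comm_monoid_add)"
proof -
  have "{w. f w \<noteq> 0 \<and> map \<rho> w = w'} = {}" using assms by auto
  then show ?thesis unfolding rename_vars_def by (simp only: sum.empty)
qed

lemma rename_vars_support: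
  assumes "inj_on \<rho> V" "f \<in> multilin_on V"
  shows "{w'. rename_vars \<rho> f w' \<noteq> 0} = map \<rho> ` {w. f w \<noteq> (0 :: 'a::comm_monoid_add)}"
proof (intro equalityI subsetI)
  fix w' assume "w' \<in> {w'. rename_vars \<rho> f w' \<noteq> 0}"
  then show "w' \<in> map \<rho> ` {w. f w \<noteq> 0}" using rename_vars_eq_0[of f \<rho> w'] by blast
next
  fix w' assume "w' \<in> map \<rho> ` {w. f w \<noteq> 0}"
  then obtain w where "f w \<noteq> 0" "w' = map \<rho> w" by auto
  then show "w' \<in> {w'. rename_vars \<rho> f w' \<noteq> 0}"
    using rename_vars_map[OF assms] multilin_onD[OF assms(2)] by auto
qed

lemma rename_vars_multilin:
  fixes f :: "('v, 'a::comm_monoid_add) ncpoly"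
  assumes "inj_on \<rho> V" "f \<in> multilin_on V"
  shows "rename_vars \<rho> f \<in> multilin_on (\<rho> ` V)"
  unfolding multilin_on_def
proof (intro CollectI allI impI)
  fix w'
  assume "rename_vars \<rho> f w' \<noteq> 0"
  then obtain w where "f w \<noteq> 0" "w' = map \<rho> w"
    using rename_vars_support[OF assms] by auto
  with assms show "distinct w' \<and> set w' = \<rho> ` V"
    by (auto simp: distinct_map dest: multilin_onD)
qed

lemma rename_vars_onto:
  assumes "bij_betw \<rho> V W" "g \<in> multilin_on W"
  obtains f where "f \<in> multilin_on V" "rename_vars \<rho> f = (g :: ('b, 'a::comm_monoid_add) ncpoly)"
proof
  define f where "f w = (if set w \<subseteq> V then g (map \<rho> w) else 0)" for w
  have inj: "inj_on \<rho> V" and img: "\<rho> ` V = W" using assms(1) by (auto simp: bij_betw_def)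
  show f: "f \<in> multilin_on V"
    unfolding multilin_on_def
  proof (intro CollectI allI impI)
    fix w assume "f w \<noteq> 0"
    then have w: "set w \<subseteq> V" and g: "g (map \<rho> w) \<noteq> 0" by (auto simp: f_def split: if_splits)
    from multilin_onD[OF assms(2) g] img have "distinct (map \<rho> w)" "\<rho> ` set w = \<rho> ` V" by auto
    then show "distinct w \<and> set w = V"
      using inj w by (auto simp: distinct_map inj_on_image_eq_iff)
  qed
  show "rename_vars \<rho> f = g"
  proof
    fix w'
    show "rename_vars \<rho> f w' = g w'"
    proof (cases "\<exists>w. set w \<subseteq> V \<and> w' = map \<rho> w")
      case True
      then show ?thesis using rename_vars_map[OF inj f] by (auto simp: f_def)
    next
      case False
      have "g w' = 0"
      proof (rule ccontr)
        assume "g w' \<noteq> 0"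
        then have "set w' \<subseteq> \<rho> ` V" using multilin_onD[OF assms(2)] img by auto
        then have "w' = map \<rho> (map (inv_into V \<rho>) w') \<and> set (map (inv_into V \<rho>) w') \<subseteq> V"
          by (auto simp: f_inv_into_f inv_into_into intro!: map_idI[symmetric])
        with False show False by blast
      qed
      moreover have "rename_vars \<rho> f w' = 0"
        using False by (intro rename_vars_eq_0) (auto simp: f_def split: if_splits)
      ultimately show ?thesis by simp
    qed
  qed
qed

lemma eval_rename_vars:
  assumes "inj_on \<rho> V" "f \<in> multilin_on V"
  shows "eval_ncpoly (rename_vars \<rho> f) \<phi> = eval_ncpoly f (\<phi> \<circ> \<rho>)"
proof
  fix U
  have inj_map: "inj_on (map \<rho>) {w. f w \<noteq> 0}"
    using assms by (auto intro!: inj_onI dest: multilin_onD inj_on_map_eq_map[OF inj_on_subset])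
  have "eval_ncpoly (rename_vars \<rho> f) \<phi> U =
      (\<Sum>w\<in>{w. f w \<noteq> 0}. rename_vars \<rho> f (map \<rho> w) * grass_prod (map \<phi> (map \<rho> w)) U)"
    unfolding eval_ncpoly_def rename_vars_support[OF assms] sum.reindex[OF inj_map] by simp
  also have "\<dots> = eval_ncpoly f (\<phi> \<circ> \<rho>) U"
    unfolding eval_ncpoly_def using assms
    by (intro sum.cong refl) (simp add: rename_vars_map multilin_onD)
  finally show "eval_ncpoly (rename_vars \<rho> f) \<phi> U = eval_ncpoly f (\<phi> \<circ> \<rho>) U" .
qed

lemma grass_monom_mem_grass_comp:
  assumes "finite A" "A \<subseteq> {1..}" "(\<Sum>a\<in>A. \<delta> a) = d"
  shows "grass_monom c A \<in> grass_comp \<delta> d"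
  using assms grass_elem_monom[OF assms(1,2)] by (simp add: grass_comp_def grass_monom_def)

lemma zero_mem_grass_comp: "0 \<in> grass_comp \<delta> d"
  by (simp add: grass_comp_def)

lemma rename_vars_mem_graded_ids:
  fixes f :: "(nat, 'a::comm_ring_1) ncpoly" and \<rho> :: "nat \<Rightarrow> int \<times> nat"
  assumes "inj_on \<rho> V" "finite V" "f \<in> multilin_on V" "f \<in> ordinary_ids"
  shows "rename_vars \<rho> f \<in> graded_ids \<delta>"
  unfolding graded_ids_def
proof (intro CollectI conjI allI impI)
  show "ncpoly (rename_vars \<rho> f)"
    using finite_imageI[OF assms(2)] rename_vars_multilin[OF assms(1,3)] by (rule ncpoly_multilin)
  fix \<phi> :: "int \<times> nat \<Rightarrow> 'a grass"
  assume "\<forall>v. \<phi> v \<in> grass_comp \<delta> (fst v)"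
  then have "\<phi> (\<rho> i) \<in> grass_comp \<delta> (fst (\<rho> i))" for i by blast
  then have "grass_elem ((\<phi> \<circ> \<rho>) i)" for i by (simp add: grass_comp_def)
  with assms(4) show "eval_ncpoly (rename_vars \<rho> f) \<phi> = grass_zero"
    unfolding eval_rename_vars[OF assms(1,3)] by (simp add: ordinary_ids_def)
qed

theorem rename_vars_multilin_ordinary_ids:
  fixes \<rho> :: "nat \<Rightarrow> int \<times> nat" and \<delta> :: "nat \<Rightarrow> int"
  assumes bij: "bij_betw \<rho> V W" and "finite V"
    and parities: "\<And>p. \<exists>T. disjoint_family_on T V \<and>
      (\<forall>x\<in>V. finite (T x) \<and> T x \<subseteq> {1..} \<and> even (card (T x)) = p x \<and> (\<Sum>a\<in>T x. \<delta> a) = fst (\<rho> x))"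
  shows "rename_vars \<rho> ` (multilin_on V \<inter> (ordinary_ids :: (nat, 'a::comm_ring_1) ncpoly set)) =
    multilin_on W \<inter> graded_ids \<delta>" (is "?L = ?R")
proof
  have inj: "inj_on \<rho> V" and img: "\<rho> ` V = W" using bij by (auto simp: bij_betw_def)
  show "?L \<subseteq> ?R"
    using rename_vars_multilin[OF inj] rename_vars_mem_graded_ids[OF inj \<open>finite V\<close>] img by auto
  show "?R \<subseteq> ?L"
  proof
    fix g :: "(int \<times> nat, 'a) ncpoly"
    assume g: "g \<in> ?R"
    then obtain f where f: "f \<in> multilin_on V" and fg: "rename_vars \<rho> f = g"
      using rename_vars_onto[OF bij] by blast
    have "\<exists>T. disjoint_family_on T V \<and> (\<forall>x\<in>V. finite (T x) \<and> even (card (T x)) = p x) \<and>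
        eval_ncpoly f (\<lambda>x. grass_monom 1 (T x)) = 0" for p
    proof -
      obtain T where T: "disjoint_family_on T V"
        "\<forall>x\<in>V. finite (T x) \<and> T x \<subseteq> {1..} \<and> even (card (T x)) = p x \<and> (\<Sum>a\<in>T x. \<delta> a) = fst (\<rho> x)"
        using parities by blast
      define \<phi> :: "int \<times> nat \<Rightarrow> 'a grass"
        where "\<phi> v = (if v \<in> W then grass_monom 1 (T (inv_into V \<rho> v)) else 0)" for v
      have "\<phi> v \<in> grass_comp \<delta> (fst v)" for v
      proof (cases "v \<in> W")
        case True
        then obtain x where x: "x \<in> V" "v = \<rho> x" using img by auto
        then have "inv_into V \<rho> v = x" using bij_betw_inv_into_left[OF bij] by simp
        with T(2) x True show ?thesis by (simp add: \<phi>_def grass_monom_mem_grass_comp)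
      next
        case False
        then show ?thesis by (simp add: \<phi>_def zero_mem_grass_comp)
      qed
      with g have "eval_ncpoly g \<phi> = 0"
        unfolding graded_ids_def grass_zero_eq_0 by blast
      moreover have "eval_ncpoly f (\<phi> \<circ> \<rho>) = eval_ncpoly f (\<lambda>x. grass_monom 1 (T x))"
        using img bij_betw_inv_into_left[OF bij] by (intro eval_ncpoly_cong[OF f]) (auto simp: \<phi>_def)
      ultimately show ?thesis
        using T eval_rename_vars[OF inj f, of \<phi>] fg by auto
    qed
    with f \<open>finite V\<close> have "f \<in> ordinary_ids" by (intro multilin_mem_ordinary_ids) auto
    with f fg show "g \<in> ?L" by blast
  qed
qed

section \<open>The substitution psi\<close>

lemma psum_Suc: "psum l (Suc j) = psum l j + l (Suc j)"
  by (simp add: psum_def)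

lemma psum_mono: "a \<le> b \<Longrightarrow> psum l a \<le> psum l b"
  unfolding psum_def by (rule sum_mono2) auto

lemma psum_pred: "1 \<le> j \<Longrightarrow> psum l j = psum l (j - 1) + l j"
  using psum_Suc[of l "j - 1"] by simp

lemma psi_var_block:
  assumes "1 \<le> j" "j \<le> t" "1 \<le> r" "r \<le> l j"
  shows "psi_var t l (psum l (j - 1) + r) = (int j, r)"
proof -
  have "(LEAST j'. psum l (j - 1) + r \<le> psum l j') = j"
  proof (rule Least_equality)
    show "psum l (j - 1) + r \<le> psum l j" using assms psum_pred[of j l] by simp
    show "j \<le> j'" if "psum l (j - 1) + r \<le> psum l j'" for j'
    proof (rule ccontr)
      assume "\<not> j \<le> j'"
      then have "psum l j' \<le> psum l (j - 1)" by (intro psum_mono) auto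
      with that assms(3) show False by simp
    qed
  qed
  moreover have "psum l (j - 1) + r \<le> psum l t"
    using assms psum_pred[of j l] psum_mono[OF assms(2), of l] by simp
  ultimately show ?thesis by (simp add: psi_var_def)
qed

lemma psi_var_tail: "1 \<le> r \<Longrightarrow> psi_var t l (psum l t + r) = (0, r)"
  by (simp add: psi_var_def)

lemma psi_var_cases:
  assumes "1 \<le> i" "i \<le> psum l t + m"
  obtains j r where "1 \<le> j" "j \<le> t" "1 \<le> r" "r \<le> l j" "i = psum l (j - 1) + r"
    | r where "1 \<le> r" "r \<le> m" "i = psum l t + r"
proof (cases "i \<le> psum l t")
  case True
  define j where "j = (LEAST j. i \<le> psum l j)"
  have "i \<le> psum l j" "j \<le> t" unfolding j_def using True by (auto intro: LeastI Least_le)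
  moreover have "j \<noteq> 0" using \<open>i \<le> psum l j\<close> assms(1) by (cases j) (auto simp: psum_def)
  moreover have "\<not> i \<le> psum l (j - 1)"
    unfolding j_def by (rule not_less_Least) (use \<open>j \<noteq> 0\<close> in \<open>simp add: j_def\<close>)
  ultimately show ?thesis
    using psum_pred[of j l] by (intro that(1)[of j "i - psum l (j - 1)"]) auto
next
  case False
  with assms show ?thesis by (intro that(2)[of "i - psum l t"]) auto
qed

lemma bij_betw_psi_var: "bij_betw (psi_var t l) {1..psum l t + m} (graded_vars m t l)"
proof -
  define psi_inv where
    "psi_inv v = (if fst v = 0 then psum l t + snd v else psum l (nat (fst v) - 1) + snd v)" for v
  have "psi_var t l i \<in> graded_vars m t l \<and> psi_inv (psi_var t l i) = i"
    if "i \<in> {1..psum l t + m}" for i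
  proof -
    from that have "1 \<le> i" "i \<le> psum l t + m" by auto
    then show ?thesis
    proof (cases rule: psi_var_cases)
      case (1 j r)
      then show ?thesis using psi_var_block[of j t r l] by (auto simp: graded_vars_def psi_inv_def)
    next
      case (2 r)
      then show ?thesis using psi_var_tail[of r t l] by (auto simp: graded_vars_def psi_inv_def)
    qed
  qed
  moreover have "psi_inv v \<in> {1..psum l t + m} \<and> psi_var t l (psi_inv v) = v"
    if "v \<in> graded_vars m t l" for v
    using that unfolding graded_vars_def
  proof (elim UnE CollectE exE conjE)
    fix j r assume v: "v = (int j, r)" "1 \<le> j" "j \<le> t" "1 \<le> r" "r \<le> l j"
    then have "psum l (j - 1) + r \<le> psum l t + m"
      using psum_pred[of j l] psum_mono[OF v(3), of l] by simp
    then show ?thesis using psi_var_block[of j t r l] v(2-5) v by (simp add: psi_inv_def)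
  qed (simp_all add: psi_inv_def psi_var_tail)
  ultimately show ?thesis
    by (intro bij_betw_byWitness[where f' = psi_inv]) auto
qed

lemma sum_degrees_graded_vars: "(\<Sum>v\<in>graded_vars m t l. nat (fst v)) = (\<Sum>j = 1..t. j * l j)"
proof -
  let ?Z = "(\<lambda>i. (0, i)) ` {1..m}" and ?X = "(\<lambda>(j, i). (int j, i)) ` (SIGMA j:{1..t}. {1..l j})"
  have "graded_vars m t l = ?Z \<union> ?X" by (auto simp: graded_vars_def)
  moreover have "?Z \<inter> ?X = {}" by auto
  ultimately have "(\<Sum>v\<in>graded_vars m t l. nat (fst v)) = (\<Sum>v\<in>?Z. nat (fst v)) + (\<Sum>v\<in>?X. nat (fst v))"
    by (simp add: sum.union_disjoint)
  also have "\<dots> = (\<Sum>v\<in>?X. nat (fst v))" by simp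
  also have "\<dots> = (\<Sum>(j, i)\<in>(SIGMA j:{1..t}. {1..l j}). j)"
    by (subst sum.reindex) (auto intro: inj_onI sum.cong split: prod.splits)
  also have "\<dots> = (\<Sum>j = 1..t. j * l j)"
    by (simp add: sum.Sigma[symmetric] mult.commute)
  finally show ?thesis .
qed

section \<open>Homogeneous monomials of prescribed degree and parity\<close>

lemma exists_disjoint_blocks:
  fixes d :: "'i \<Rightarrow> nat"
  assumes "finite A"
  shows "\<exists>B. disjoint_family_on B A \<and> (\<forall>i\<in>A. B i \<subseteq> {..<\<Sum>i\<in>A. d i} \<and> card (B i) = d i)"
  using assms
proof (induction A rule: finite_induct)
  case empty
  then show ?case by (simp add: disjoint_family_on_def)
next
  case (insert x A)
  then obtain B where B: "disjoint_family_on B A" "\<forall>i\<in>A. B i \<subseteq> {..<\<Sum>i\<in>A. d i} \<and> card (B i) = d i"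
    by blast
  let ?s = "\<Sum>i\<in>A. d i"
  let ?B = "B(x := {?s..<?s + d x})"
  have "disjoint_family_on ?B (insert x A)"
    using B insert.hyps(2) by (fastforce simp: disjoint_family_on_def)
  moreover have "\<forall>i\<in>insert x A. ?B i \<subseteq> {..<\<Sum>i\<in>insert x A. d i} \<and> card (?B i) = d i"
    using B insert.hyps by (auto simp: subset_iff less_imp_le_nat trans_less_add2)
  ultimately show ?case by blast
qed

text \<open>Each variable x gets d x generators of degree 1, plus one generator of degree 0
  when that is needed to reach the prescribed parity.\<close>
lemma exists_parity_degree_family:
  fixes \<delta> :: "nat \<Rightarrow> int" and d :: "'i \<Rightarrow> nat"
  assumes "finite A"
    and g: "inj_on g {..<\<Sum>i\<in>A. d i}" "\<And>r. r < (\<Sum>i\<in>A. d i) \<Longrightarrow> 1 \<le> g r \<and> \<delta> (g r) = 1"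
    and h: "inj_on h A" "\<And>i. i \<in> A \<Longrightarrow> 1 \<le> h i \<and> \<delta> (h i) = 0"
  shows "\<exists>T. disjoint_family_on T A \<and>
    (\<forall>i\<in>A. finite (T i) \<and> T i \<subseteq> {1..} \<and> even (card (T i)) = p i \<and> (\<Sum>a\<in>T i. \<delta> a) = int (d i))"
proof -
  obtain B where B: "disjoint_family_on B A" "\<And>i. i \<in> A \<Longrightarrow> B i \<subseteq> {..<\<Sum>i\<in>A. d i} \<and> card (B i) = d i"
    using exists_disjoint_blocks[OF assms(1), of d] by blast
  define H where "H i = (if even (d i) = p i then {} else {h i})" for i
  define T where "T i = g ` B i \<union> H i" for i
  have deg1: "\<delta> a = 1" "1 \<le> a" if "i \<in> A" "a \<in> g ` B i" for i a
    using that B(2) g(2) by auto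
  have deg0: "\<delta> a = 0" "1 \<le> a" if "i \<in> A" "a \<in> H i" for i a
    using that h(2) by (auto simp: H_def split: if_splits)
  have gB_H: "g ` B i \<inter> H j = {}" if "i \<in> A" "j \<in> A" for i j
    using deg1[OF that(1)] deg0[OF that(2)] by fastforce
  have "disjoint_family_on T A"
    unfolding disjoint_family_on_def
  proof (intro ballI impI)
    fix i j assume ij: "i \<in> A" "j \<in> A" "i \<noteq> j"
    have "g ` B i \<inter> g ` B j = g ` (B i \<inter> B j)"
      using B(2) ij by (intro inj_on_image_Int[OF g(1), symmetric]) auto
    also have "\<dots> = {}" using B(1) ij by (simp add: disjoint_family_onD)
    finally have "g ` B i \<inter> g ` B j = {}" .
    moreover have "H i \<inter> H j = {}" using h(1) ij by (auto simp: H_def inj_on_def)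
    ultimately show "T i \<inter> T j = {}"
      using gB_H[OF ij(1,2)] gB_H[OF ij(2,1)] by (auto simp: T_def)
  qed
  moreover have "finite (T i) \<and> T i \<subseteq> {1..} \<and> even (card (T i)) = p i \<and> (\<Sum>a\<in>T i. \<delta> a) = int (d i)"
    if i: "i \<in> A" for i
  proof -
    have fin: "finite (B i)" "finite (H i)" using B(2)[OF i] by (auto simp: H_def finite_subset)
    have card_gB: "card (g ` B i) = d i"
      using B(2)[OF i] inj_on_subset[OF g(1)] by (simp add: card_image)
    have "card (T i) = d i + card (H i)"
      unfolding T_def using gB_H[OF i i] fin card_gB by (simp add: card_Un_disjoint)
    moreover have "(\<Sum>a\<in>T i. \<delta> a) = (\<Sum>a\<in>g ` B i. 1) + (\<Sum>a\<in>H i. 0)"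
      unfolding T_def using gB_H[OF i i] fin deg1[OF i] deg0[OF i]
      by (simp add: sum.union_disjoint)
    ultimately show ?thesis
      using fin card_gB deg1[OF i] deg0[OF i] by (auto simp: T_def H_def)
  qed
  ultimately show ?thesis by blast
qed

lemma psi_var_rename_multilin_ordinary_ids:
  fixes \<delta> :: "nat \<Rightarrow> int" and g h :: "nat \<Rightarrow> nat"
  assumes n: "n = (\<Sum>j = 1..t. l j) + m"
    and g: "inj_on g {..<\<Sum>j = 1..t. j * l j}" "\<And>r. r < (\<Sum>j = 1..t. j * l j) \<Longrightarrow> 1 \<le> g r \<and> \<delta> (g r) = 1"
    and h: "inj_on h {1..n}" "\<And>i. i \<in> {1..n} \<Longrightarrow> 1 \<le> h i \<and> \<delta> (h i) = 0"
  shows "rename_vars (psi_var t l) ` (multilin_ord n \<inter> (ordinary_ids :: (nat, 'a::comm_ring_1) ncpoly set)) =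
    multilin_graded m t l \<inter> graded_ids \<delta>"
proof -
  let ?d = "\<lambda>i. nat (fst (psi_var t l i))"
  have bij: "bij_betw (psi_var t l) {1..n} (graded_vars m t l)"
    using bij_betw_psi_var by (simp add: n psum_def)
  then have nonneg: "0 \<le> fst (psi_var t l i)" if "i \<in> {1..n}" for i
    using bij_betw_apply[OF bij that] by (auto simp: graded_vars_def)
  have "(\<Sum>i\<in>{1..n}. ?d i) = (\<Sum>v\<in>graded_vars m t l. nat (fst v))"
    using sum.reindex_bij_betw[OF bij, of "\<lambda>v. nat (fst v)"] by simp
  then have total: "(\<Sum>i\<in>{1..n}. ?d i) = (\<Sum>j = 1..t. j * l j)"
    by (simp add: sum_degrees_graded_vars)
  have "\<exists>T. disjoint_family_on T {1..n} \<and> (\<forall>i\<in>{1..n}. finite (T i) \<and> T i \<subseteq> {1..} \<and>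
      even (card (T i)) = p i \<and> (\<Sum>a\<in>T i. \<delta> a) = fst (psi_var t l i))" for p
    using exists_parity_degree_family[of "{1..n}" g ?d \<delta> h p] g h nonneg
    unfolding total by auto
  then show ?thesis
    unfolding multilin_ord_eq multilin_graded_eq
    by (rule rename_vars_multilin_ordinary_ids[OF bij finite_atLeastAtMost])
qed

theorem mainTheorem3:
  fixes k t m n :: nat and l :: "nat \<Rightarrow> nat"
  assumes "0 < k" and "1 \<le> t" and "t \<le> k"
    and "n = (\<Sum>j = 1..t. l j) + m"
  shows "rename_vars (psi_var t l) ` (multilin_ord n \<inter> (ordinary_ids :: (nat, 'a::field_char_0) ncpoly set))
           = multilin_graded m t l \<inter> graded_ids delta_inf
     \<and> ((\<Sum>j = 1..t. j * l j) \<le> k \<longrightarrow>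
         rename_vars (psi_var t l) ` (multilin_ord n \<inter> (ordinary_ids :: (nat, 'a::field_char_0) ncpoly set))
           = multilin_graded m t l \<inter> graded_ids (delta_kstar k))"
proof
  show "rename_vars (psi_var t l) ` (multilin_ord n \<inter> ordinary_ids) = multilin_graded m t l \<inter> graded_ids delta_inf"
    by (rule psi_var_rename_multilin_ordinary_ids[OF assms(4), where g = "\<lambda>r. 2 * r + 1" and h = "\<lambda>i. 2 * i"])
      (auto simp: delta_inf_def inj_on_def)
  show "(\<Sum>j = 1..t. j * l j) \<le> k \<longrightarrow>
      rename_vars (psi_var t l) ` (multilin_ord n \<inter> ordinary_ids) = multilin_graded m t l \<inter> graded_ids (delta_kstar k)"
    by (intro impI psi_var_rename_multilin_ordinary_ids[OF assms(4), where g = "\<lambda>r. r + 1" and h = "\<lambda>i. k + i"])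
      (auto simp: delta_kstar_def inj_on_def)
qed

end
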